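(* For all integers $0\le k\le l$, the ideal $I_{l,k}=(h_{l,k,0},h_{l,k,1},\dots,h_{l,k,k})$ of $\mathbb{Z}[q,q^{-1}]$ is principal, generated by $g_{l,k}=\mathrm{GCD}(h_{l,k,0},\dots,h_{l,k,k})$.
   Context: In $\mathbb{Z}[q,q^{-1}]$ set $\{i\}_q=q^i-1$, $\{i\}_{q,n}=\{i\}_q\{i-1\}_q\cdots\{i-n+1\}_q$ (equal to $1$ for $n=0$), $\{n\}_q!=\{n\}_{q,n}$. For $0\le i\le k\le l$ set $h_{l,k,i}=\{l-i\}_{q,k-i}\,\{i\}_q!$. $(a_1,\dots,a_r)$ denotes the ideal generated by $a_1,\dots,a_r$; GCD is a greatest common divisor in the UFD $\mathbb{Z}[q,q^{-1}]$ (defined up to units $\pm q^j$). *)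

theory Defs
  imports "HOL-Computational_Algebra.Computational_Algebra"
          "HOL-Computational_Algebra.Polynomial_FPS"
          "HOL-Computational_Algebra.Formal_Laurent_Series"
begin

definition qbr :: "nat \<Rightarrow> int poly" where
  "qbr i = monom 1 i - 1"

definition qfall :: "nat \<Rightarrow> nat \<Rightarrow> int poly" where
  "qfall i n = (\<Prod>j<n. qbr (i - j))"

definition qfact :: "nat \<Rightarrow> int poly" where
  "qfact n = qfall n n"

definition h :: "nat \<Rightarrow> nat \<Rightarrow> nat \<Rightarrow> int poly" where
  "h l k i = qfall (l - i) (k - i) * qfact i"

text \<open>The ring Z[q,q^{-1}] realised inside the Laurent series over int:
  embedding of integer polynomials and the set of Laurent polynomials.\<close>
definition lp :: "int poly \<Rightarrow> int fls" where
  "lp p = fps_to_fls (fps_of_poly p)"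

definition laurent_polys :: "int fls set" where
  "laurent_polys = {fls_shift n (lp p) | n p. True}"

definition laurent_ideal :: "(nat \<Rightarrow> int fls) \<Rightarrow> nat \<Rightarrow> int fls set" where
  "laurent_ideal f k = {\<Sum>i\<le>k. c i * f i | c. \<forall>i\<le>k. c i \<in> laurent_polys}"

end

theory Submission
  imports Defs
begin

(*
  We show the stronger fact that already in Z[q] the ideal I_{l,k} = (h_{l,k,i})_{i<=k} is
  generated by the explicit polynomial
      gen l k = prod_{j=1..k} gcd({l+1-j}_q, {j}_q!).
  Since gen l k then divides every h_{l,k,i} and is a Z[q]-combination of them, it is associated
  to the GCD, and the statement transfers along the embedding Z[q] -> Z[q,q^-1].

  The proof is by induction on k, using h_{l,k+1,i} = {l-k}_q h_{l,k,i} for i <= k and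
  h_{l,k+1,k+1} = {k+1}_q!, so that I_{l,k+1} = ({l-k}_q gen l k, {k+1}_q!).  Writing
  {l-k}_q = d p with d = gcd({l-k}_q, {k+1}_q!) and {k+1}_q! = gen l (k+1) q, it suffices that
  p and q are comaximal in Z[q].  This follows from two divisibilities proved by comparing
  multiplicities of complex roots of unity (for monic polynomials this detects divisibility
  in Z[q]): gen l (k+1) divides {k+1}_q!, and prod_{j<=k+1} {gcd(j,l-k)}_q divides gen l (k+1);
  together with the identity {gcd(m,n)}_q in ({m}_q, {n}_q) (Euclid's algorithm on exponents).
*)

section \<open>Laurent polynomials and the reduction to Z[q]\<close>

lemma lp_mult: "lp (p * q) = lp p * lp q"
  by (simp add: lp_def fps_of_poly_mult fls_times_fps_to_fls)

lemma lp_add: "lp (p + q) = lp p + lp q"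
  by (simp add: lp_def fps_of_poly_add)

lemma lp_sum: "lp (sum f A) = (\<Sum>x\<in>A. lp (f x))"
  by (induction A rule: infinite_finite_induct) (auto simp: lp_add, simp_all add: lp_def)

lemma lp_monom: "lp (monom 1 j) = fls_shift (- int j) 1"
  by (simp add: lp_def fps_of_poly_monom fps_to_fls_power fls_X_power_conv_shift_1)

lemma lp_in_laurent_polys: "lp p \<in> laurent_polys"
  unfolding laurent_polys_def by (rule CollectI, rule exI[of _ 0], auto)

text \<open>Two Laurent polynomials can be written over a common power of q; this gives closure
  under addition.\<close>

lemma fls_shift_lp_common:
  assumes "n \<le> N"
  shows "fls_shift n (lp p) = fls_shift N (lp (p * monom 1 (nat (N - n))))"
proof -
  have "lp (p * monom 1 (nat (N - n))) = fls_shift (- (N - n)) (lp p)"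
    using assms by (simp add: lp_mult lp_monom fls_shifted_times_simps)
  thus ?thesis by simp
qed

lemma laurent_polys_mult:
  "a \<in> laurent_polys \<Longrightarrow> b \<in> laurent_polys \<Longrightarrow> a * b \<in> laurent_polys"
  unfolding laurent_polys_def
  by (auto simp: fls_times_both_shifted_simp lp_mult[symmetric]) blast

lemma laurent_polys_add:
  assumes "a \<in> laurent_polys" "b \<in> laurent_polys"
  shows "a + b \<in> laurent_polys"
proof -
  obtain n p m r where a: "a = fls_shift n (lp p)" and b: "b = fls_shift m (lp r)"
    using assms unfolding laurent_polys_def by auto
  define N where "N = max n m"
  have "a + b = fls_shift N (lp (p * monom 1 (nat (N - n)) + r * monom 1 (nat (N - m))))"
    unfolding a b lp_add fls_shift_plus
    by (subst fls_shift_lp_common[of n N], simp add: N_def,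
        subst fls_shift_lp_common[of m N], simp add: N_def) simp
  thus ?thesis unfolding laurent_polys_def by blast
qed

lemma laurent_polys_sum:
  "(\<And>i. i \<in> A \<Longrightarrow> f i \<in> laurent_polys) \<Longrightarrow> sum f A \<in> laurent_polys"
proof (induction A rule: infinite_finite_induct)
  case (infinite A) then show ?case using lp_in_laurent_polys[of 0] by (simp add: lp_def)
next
  case empty then show ?case using lp_in_laurent_polys[of 0] by (simp add: lp_def)
next
  case (insert x F) then show ?case by (simp add: laurent_polys_add)
qed

lemma laurent_ideal_eq_principal:
  fixes f :: "nat \<Rightarrow> int poly" and g :: "int poly"
  assumes dvd: "\<And>i. i \<le> k \<Longrightarrow> g dvd f i"
    and comb: "g = (\<Sum>i\<le>k. c i * f i)"
  shows "laurent_ideal (\<lambda>i. lp (f i)) k = laurent_ideal (\<lambda>_. lp g) 0"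
proof
  show "laurent_ideal (\<lambda>i. lp (f i)) k \<subseteq> laurent_ideal (\<lambda>_. lp g) 0"
  proof
    fix x assume "x \<in> laurent_ideal (\<lambda>i. lp (f i)) k"
    then obtain a where x: "x = (\<Sum>i\<le>k. a i * lp (f i))" and a: "\<forall>i\<le>k. a i \<in> laurent_polys"
      unfolding laurent_ideal_def by auto
    obtain w where w: "\<And>i. i \<le> k \<Longrightarrow> f i = g * w i"
      using dvd unfolding dvd_def by metis
    have "x = (\<Sum>i\<le>k. a i * lp (w i)) * lp g"
      unfolding x sum_distrib_right by (rule sum.cong) (auto simp: w lp_mult)
    moreover have "(\<Sum>i\<le>k. a i * lp (w i)) \<in> laurent_polys"
      using a by (auto intro!: laurent_polys_sum laurent_polys_mult lp_in_laurent_polys)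
    ultimately show "x \<in> laurent_ideal (\<lambda>_. lp g) 0"
      unfolding laurent_ideal_def by (auto intro!: exI[of _ "\<lambda>_. (\<Sum>i\<le>k. a i * lp (w i))"])
  qed
next
  show "laurent_ideal (\<lambda>_. lp g) 0 \<subseteq> laurent_ideal (\<lambda>i. lp (f i)) k"
  proof
    fix x assume "x \<in> laurent_ideal (\<lambda>_. lp g) 0"
    then obtain a where x: "x = a * lp g" and a: "a \<in> laurent_polys"
      unfolding laurent_ideal_def by auto
    have "x = (\<Sum>i\<le>k. (a * lp (c i)) * lp (f i))"
      unfolding x comb lp_sum sum_distrib_left by (rule sum.cong) (auto simp: lp_mult mult.assoc)
    moreover have "\<forall>i\<le>k. a * lp (c i) \<in> laurent_polys"
      using a by (auto intro: laurent_polys_mult lp_in_laurent_polys)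
    ultimately show "x \<in> laurent_ideal (\<lambda>i. lp (f i)) k"
      unfolding laurent_ideal_def by (intro CollectI exI[of _ "\<lambda>i. a * lp (c i)"]) auto
  qed
qed


section \<open>Comaximal elements\<close>

definition comaximal :: "'a::comm_ring_1 \<Rightarrow> 'a \<Rightarrow> bool" where
  "comaximal x y \<longleftrightarrow> (\<exists>s t. s * x + t * y = 1)"

lemma comaximal_mult_right:
  assumes "comaximal x y" "comaximal x z"
  shows "comaximal x (y * z)"
proof -
  obtain s1 t1 s2 t2 where 1: "s1 * x + t1 * y = 1" and 2: "s2 * x + t2 * z = 1"
    using assms unfolding comaximal_def by blast
  have "1 = (s1 * x + t1 * y) * (s2 * x + t2 * z)" using 1 2 by simp
  also have "\<dots> = (s1 * s2 * x + s1 * t2 * z + t1 * y * s2) * x + (t1 * t2) * (y * z)"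
    by (simp add: algebra_simps)
  finally show ?thesis unfolding comaximal_def by metis
qed

lemma comaximal_prod_right:
  "finite A \<Longrightarrow> (\<And>j. j \<in> A \<Longrightarrow> comaximal x (f j)) \<Longrightarrow> comaximal x (prod f A)"
proof (induction A rule: finite_induct)
  case empty then show ?case unfolding comaximal_def by (intro exI[of _ 0] exI[of _ 1]) simp
next
  case (insert j F) then show ?case by (simp add: comaximal_mult_right)
qed

lemma comaximal_dvd_left: "comaximal x y \<Longrightarrow> x' dvd x \<Longrightarrow> comaximal x' y"
  unfolding comaximal_def by (auto elim!: dvdE) (metis mult.assoc mult.commute)

lemma comaximal_dvd_right: "comaximal x y \<Longrightarrow> y' dvd y \<Longrightarrow> comaximal x y'"
  unfolding comaximal_def by (auto elim!: dvdE) (metis mult.assoc mult.commute)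

lemma comaximal_cofactors:
  fixes g :: "'a::idom"
  assumes "g \<noteq> 0" and "g = s * (g * a) + t * (g * b)"
  shows "comaximal a b"
proof -
  have "g * 1 = g * (s * a + t * b)" using assms(2) by (simp add: algebra_simps)
  then have "s * a + t * b = 1" using assms(1) by simp
  then show ?thesis unfolding comaximal_def by blast
qed

lemma comaximal_cofactors_generate:
  assumes "comaximal p q"
  shows "\<exists>u v. g * d = u * (d * p * g) + v * (g * d * q)"
proof -
  obtain s t where st: "s * p + t * q = 1" using assms unfolding comaximal_def by blast
  have "g * d = g * d * (s * p + t * q)" using st by simp
  also have "\<dots> = s * (d * p * g) + t * (g * d * q)" by (simp add: algebra_simps)
  finally show ?thesis by blast
qed


section \<open>q-numbers and q-factorials\<close>

lemma qbr_X_power: "qbr n = [:0, 1:] ^ n - 1"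
  by (simp add: qbr_def monom_altdef)

lemma lead_coeff_qbr:
  assumes "n > 0"
  shows "lead_coeff (qbr n) = 1"
proof -
  have "degree (qbr n) = n"
  proof (rule antisym)
    have "degree (monom (1::int) n - 1) \<le> max (degree (monom (1::int) n)) (degree (1::int poly))"
      by (rule degree_diff_le_max)
    then show "degree (qbr n) \<le> n" by (simp add: qbr_def degree_monom_eq)
    show "n \<le> degree (qbr n)" by (rule le_degree) (use assms in \<open>simp add: qbr_def\<close>)
  qed
  then show ?thesis using assms by (simp add: qbr_def)
qed

lemma qbr_nonzero: "n > 0 \<Longrightarrow> qbr n \<noteq> 0"
  by (metis lead_coeff_qbr leading_coeff_0_iff zero_neq_one)

lemma qbr_add: "qbr (a + b) = monom 1 a * qbr b + qbr a"
proof -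
  have "(monom 1 m :: int poly) = [:0, 1:] ^ m" for m by (simp add: monom_altdef)
  then show ?thesis unfolding qbr_X_power by (simp add: power_add algebra_simps)
qed

lemma qbr_dvd:
  assumes "a dvd b"
  shows "qbr a dvd qbr b"
proof -
  obtain c where b: "b = a * c" using assms by blast
  have "qbr b = ([:0, 1:] ^ a) ^ c - 1" unfolding qbr_X_power b by (simp only: power_mult)
  also have "\<dots> = ([:0, 1:] ^ a - 1) * (\<Sum>i<c. ([:0, 1:] ^ a) ^ i)" by (rule power_diff_1_eq)
  finally show ?thesis unfolding qbr_X_power by (rule dvdI)
qed

text \<open>Euclid's algorithm on exponents: {gcd(m,n)}_q lies in the ideal ({m}_q, {n}_q).\<close>

lemma qbr_gcd_combination: "\<exists>s t. qbr (gcd m n) = s * qbr m + t * qbr n"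
proof (induction m n rule: gcd_nat_induct)
  case (base m)
  then show ?case by (intro exI[of _ 1] exI[of _ 0]) simp
next
  case (step m n)
  obtain s t where st: "qbr (gcd n (m mod n)) = s * qbr n + t * qbr (m mod n)"
    using step.IH by blast
  obtain M where M: "qbr (n * (m div n)) = qbr n * M" using qbr_dvd[of n "n * (m div n)"] by auto
  have "qbr m = monom 1 (m mod n) * qbr (n * (m div n)) + qbr (m mod n)"
    using qbr_add[of "m mod n" "n * (m div n)"] by simp
  then have "qbr (m mod n) = qbr m - (monom 1 (m mod n) * M) * qbr n"
    unfolding M by (simp add: algebra_simps)
  then have "qbr (gcd m n) = s * qbr n + t * (qbr m - (monom 1 (m mod n) * M) * qbr n)"
    using st by (simp add: gcd_red_nat[symmetric])
  also have "\<dots> = t * qbr m + (s - t * monom 1 (m mod n) * M) * qbr n"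
    by (simp add: algebra_simps)
  finally show ?case by blast
qed

lemma qfact_0: "qfact 0 = 1"
  by (simp add: qfact_def qfall_def)

lemma qfact_Suc: "qfact (Suc j) = qbr (Suc j) * qfact j"
  unfolding qfact_def qfall_def by (subst prod.lessThan_Suc_shift) simp

lemma qfact_prod: "qfact j = (\<Prod>t\<in>{1..j}. qbr t)"
  by (induction j) (simp_all add: qfact_0 qfact_Suc prod.cl_ivl_Suc mult.commute)

lemma qfact_nonzero: "qfact j \<noteq> 0"
  by (simp add: qfact_prod qbr_nonzero)

lemma lead_coeff_qfact: "lead_coeff (qfact j) = 1"
  by (simp add: qfact_prod lead_coeff_prod lead_coeff_qbr)

lemma qbr_dvd_qfact: "1 \<le> t \<Longrightarrow> t \<le> j \<Longrightarrow> qbr t dvd qfact j"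
  unfolding qfact_prod by (rule dvd_prodI) auto

lemma h_diag: "h l k k = qfact k"
  by (simp add: h_def qfall_def)

lemma h_Suc:
  assumes "i \<le> k" "Suc k \<le> l"
  shows "h l (Suc k) i = qbr (l - k) * h l k i"
proof -
  have "Suc k - i = Suc (k - i)" using assms by simp
  then have "qfall (l - i) (Suc k - i) = qfall (l - i) (k - i) * qbr (l - i - (k - i))"
    unfolding qfall_def by simp
  also have "l - i - (k - i) = l - k" using assms by simp
  finally show ?thesis unfolding h_def by (simp add: mult_ac)
qed


section \<open>Multiplicities of complex roots\<close>

definition cpoly :: "int poly \<Rightarrow> complex poly" where
  "cpoly p = map_poly of_int p"

lemma coeff_cpoly: "coeff (cpoly p) n = of_int (coeff p n)"
  by (simp add: cpoly_def coeff_map_poly)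

lemma cpoly_mult: "cpoly (p * q) = cpoly p * cpoly q"
  by (rule poly_eqI) (simp add: coeff_cpoly coeff_mult)

lemma cpoly_add: "cpoly (p + q) = cpoly p + cpoly q"
  by (rule poly_eqI) (simp add: coeff_cpoly)

lemma cpoly_smult: "cpoly (smult c p) = smult (of_int c) (cpoly p)"
  by (rule poly_eqI) (simp add: coeff_cpoly)

lemma cpoly_eq_0_iff: "cpoly p = 0 \<longleftrightarrow> p = 0"
  by (simp add: cpoly_def map_poly_eq_0_iff)

lemma degree_cpoly: "degree (cpoly p) = degree p"
  by (simp add: cpoly_def degree_map_poly)

lemma complex_poly_dvd_by_order:
  fixes p q :: "complex poly"
  assumes "p \<noteq> 0" "q \<noteq> 0" "\<And>a. order a p \<le> order a q"
  shows "p dvd q"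
  using assms
proof (induction "degree p" arbitrary: p q rule: less_induct)
  case less
  show ?case
  proof (cases "degree p = 0")
    case True
    then show ?thesis using less.prems(1) by (simp add: is_unit_iff_degree unit_imp_dvd)
  next
    case False
    then have "\<not> constant (poly p)" by (simp add: constant_degree)
    then obtain a where "poly p a = 0" using fundamental_theorem_of_algebra by blast
    then obtain p1 where p1: "p = [:-a, 1:] * p1" using poly_eq_0_iff_dvd by blast
    have "order a p \<noteq> 0" using \<open>poly p a = 0\<close> less.prems(1) order_root by blast
    then have "poly q a = 0" using less.prems(3)[of a] order_root by (metis le_zero_eq)
    then obtain q1 where q1: "q = [:-a, 1:] * q1" using poly_eq_0_iff_dvd by blast
    have nz: "p1 \<noteq> 0" "q1 \<noteq> 0" using p1 q1 less.prems(1,2) by auto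
    have "degree p = degree [:-a, 1::complex:] + degree p1"
      unfolding p1 by (rule degree_mult_eq) (use nz in auto)
    then have "degree p1 < degree p" by simp
    moreover have "order b p1 \<le> order b q1" for b
    proof -
      have "order b p = order b [:-a, 1:] + order b p1"
        unfolding p1 using less.prems(1)[unfolded p1] by (rule order_mult)
      moreover have "order b q = order b [:-a, 1:] + order b q1"
        unfolding q1 using less.prems(2)[unfolded q1] by (rule order_mult)
      ultimately show ?thesis using less.prems(3)[of b] by simp
    qed
    ultimately have "p1 dvd q1" using less.hyps nz by blast
    then show ?thesis unfolding p1 q1 by (rule mult_dvd_mono[OF dvd_refl])
  qed
qed

definition root_mult :: "complex \<Rightarrow> int poly \<Rightarrow> nat" where
  "root_mult a p = order a (cpoly p)"

text \<open>For integer polynomials with unit leading coefficient, root multiplicities still decide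
  divisibility in Z[q]: the pseudo-remainder is divisible by p over C, hence zero.\<close>

lemma int_poly_dvd_by_root_mult:
  fixes p r :: "int poly"
  assumes unit: "is_unit (lead_coeff p)" and "r \<noteq> 0"
    and mult_le: "\<And>a. root_mult a p \<le> root_mult a r"
  shows "p dvd r"
proof -
  have "p \<noteq> 0" using unit by auto
  obtain s t where st: "pseudo_divmod r p = (s, t)" by (cases "pseudo_divmod r p") auto
  define c where "c = lead_coeff p ^ (Suc (degree r) - degree p)"
  have eq: "smult c r = p * s + t" and t: "t = 0 \<or> degree t < degree p"
    using pseudo_divmod[OF \<open>p \<noteq> 0\<close> st] by (simp_all add: c_def)
  have "cpoly p dvd cpoly r"
    using \<open>p \<noteq> 0\<close> \<open>r \<noteq> 0\<close> mult_le
    by (intro complex_poly_dvd_by_order) (simp_all add: cpoly_eq_0_iff root_mult_def)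
  moreover have "cpoly t = smult (of_int c) (cpoly r) - cpoly p * cpoly s"
    using arg_cong[OF eq, of cpoly] by (simp add: cpoly_mult cpoly_add cpoly_smult)
  ultimately have "cpoly p dvd cpoly t" by (simp add: dvd_diff dvd_smult)
  have "t = 0"
  proof (rule ccontr)
    assume "t \<noteq> 0"
    then have "degree (cpoly p) \<le> degree (cpoly t)"
      using \<open>cpoly p dvd cpoly t\<close> by (intro dvd_imp_degree_le) (simp_all add: cpoly_eq_0_iff)
    then show False using t \<open>t \<noteq> 0\<close> by (simp add: degree_cpoly)
  qed
  have "\<bar>c\<bar> = 1" using unit by (simp add: c_def power_abs)
  then have "c * c = 1" by (metis abs_mult_self_eq mult_1)
  then have "r = p * smult c s"
    using eq \<open>t = 0\<close> by (metis mult_smult_right smult_1_left smult_smult add_0_right)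
  then show ?thesis by (rule dvdI)
qed

lemma lead_coeff_unit_if_dvd_monic:
  fixes p q :: "int poly"
  assumes "p dvd q" "lead_coeff q = 1"
  shows "is_unit (lead_coeff p)"
proof -
  obtain k where "q = p * k" using assms(1) by blast
  then have "1 = lead_coeff p * lead_coeff k" using assms(2) by (simp add: lead_coeff_mult)
  then show ?thesis by (rule dvdI)
qed

lemma root_mult_dvd: "q \<noteq> 0 \<Longrightarrow> p dvd q \<Longrightarrow> root_mult a p \<le> root_mult a q"
  unfolding root_mult_def
  by (rule dvd_imp_order_le) (auto simp: cpoly_eq_0_iff cpoly_mult elim!: dvdE)

lemma root_mult_prod:
  "finite A \<Longrightarrow> (\<And>x. x \<in> A \<Longrightarrow> f x \<noteq> 0) \<Longrightarrow> root_mult a (prod f A) = (\<Sum>x\<in>A. root_mult a (f x))"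
proof (induction A rule: finite_induct)
  case empty then show ?case by (simp add: root_mult_def cpoly_def)
next
  case (insert x F)
  then show ?case by (simp add: root_mult_def cpoly_mult order_mult cpoly_eq_0_iff)
qed

lemma root_mult_qbr:
  assumes "n > 0"
  shows "root_mult a (qbr n) = (if a ^ n = 1 then 1 else 0)"
proof -
  have cq: "cpoly (qbr n) = monom 1 n - 1"
    by (rule poly_eqI) (simp add: coeff_cpoly qbr_def coeff_monom)
  show ?thesis
  proof (cases "a ^ n = 1")
    case False
    then show ?thesis by (simp add: root_mult_def order_0I cq poly_monom)
  next
    case True
    have nz: "cpoly (qbr n) \<noteq> 0" using qbr_nonzero[OF assms] by (simp add: cpoly_eq_0_iff)
    have "a \<noteq> 0" using True assms by (auto simp: power_0_left)
    then have "order a (pderiv (cpoly (qbr n))) = 0"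
      using assms by (intro order_0I) (simp add: cq pderiv_diff pderiv_monom poly_monom)
    then show ?thesis
      using order_pderiv[OF nz] True by (simp add: root_mult_def cq poly_monom)
  qed
qed

lemma sum_indicator_card:
  "finite A \<Longrightarrow> (\<Sum>x\<in>A. if P x then 1 else 0 :: nat) = card {x\<in>A. P x}"
  by (simp add: sum.If_cases Int_def conj_commute)

lemma root_mult_qfact: "root_mult a (qfact j) = card {t\<in>{1..j}. a ^ t = 1}"
proof -
  have "root_mult a (qfact j) = (\<Sum>t\<in>{1..j}. root_mult a (qbr t))"
    unfolding qfact_prod by (rule root_mult_prod) (auto simp: qbr_nonzero)
  also have "\<dots> = (\<Sum>t\<in>{1..j}. if a ^ t = 1 then 1 else 0)"
    by (rule sum.cong) (auto simp: root_mult_qbr)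
  finally show ?thesis by (simp add: sum_indicator_card)
qed


section \<open>Roots of unity\<close>

lemma power_gcd_eq_1:
  assumes "(a::complex) ^ m = 1" "a ^ n = 1"
  shows "a ^ gcd m n = 1"
proof (cases "m = 0")
  case True then show ?thesis using assms by simp
next
  case False
  then obtain x y where xy: "m * x = n * y + gcd m n" using bezout_nat by blast
  have "1 = a ^ (m * x)" using assms by (simp add: power_mult)
  also have "\<dots> = a ^ gcd m n" using assms by (simp add: xy power_add power_mult)
  finally show ?thesis by simp
qed

lemma power_dvd_eq_1: "(a::complex) ^ m = 1 \<Longrightarrow> m dvd n \<Longrightarrow> a ^ n = 1"
  by (auto elim!: dvdE simp: power_mult)

lemma power_diff_eq_1: "(a::complex) ^ x = 1 \<Longrightarrow> a ^ y = 1 \<Longrightarrow> x \<le> y \<Longrightarrow> a ^ (y - x) = 1"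
  by (metis le_add_diff_inverse mult_1 power_add)

text \<open>Two counting inequalities for roots of unity, both proved by a shift injection starting
  from the least element of the smaller set.\<close>

lemma card_roots_shifted_le:
  assumes "K \<le> l"
  shows "card {j\<in>{1..K}. a ^ (l + 1 - j) = 1 \<and> (\<exists>t\<in>{1..j}. (a::complex) ^ t = 1)}
         \<le> card {t\<in>{1..K}. a ^ t = 1}" (is "card ?S \<le> card ?T")
proof (cases "?S = {}")
  case True then show ?thesis unfolding True by simp
next
  case False
  define j0 where "j0 = Min ?S"
  have j0S: "j0 \<in> ?S" using Min_in[OF _ False] by (simp add: j0_def)
  then obtain t0 where t0: "t0 \<in> {1..j0}" "a ^ t0 = 1" by blast
  have least: "j0 \<le> j" if "j \<in> ?S" for j using Min_le[OF _ that] by (simp add: j0_def)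
  define f where "f j = j - j0 + t0" for j
  have "inj_on f ?S"
  proof (rule inj_onI)
    fix x y assume "x \<in> ?S" "y \<in> ?S" "f x = f y"
    then show "x = y" using least[of x] least[of y] unfolding f_def by linarith
  qed
  moreover have "f ` ?S \<subseteq> ?T"
  proof
    fix x assume "x \<in> f ` ?S"
    then obtain j where jS: "j \<in> ?S" and x: "x = f j" by blast
    have "j0 \<le> j" using least[OF jS] .
    then have "l + 1 - j0 - (l + 1 - j) = j - j0" using jS assms by auto
    then have "a ^ (j - j0) = 1"
      using power_diff_eq_1[of a "l + 1 - j" "l + 1 - j0"] jS j0S \<open>j0 \<le> j\<close> by auto
    then have "a ^ x = 1" using t0 by (simp add: x f_def power_add)
    moreover have "1 \<le> x" "x \<le> K" using t0 jS \<open>j0 \<le> j\<close> by (auto simp: x f_def)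
    ultimately show "x \<in> ?T" by simp
  qed
  ultimately show ?thesis by (rule card_inj_on_le) simp
qed

lemma card_roots_gcd_le:
  assumes "K \<le> l"
  shows "card {j\<in>{1..K}. (a::complex) ^ (gcd j (l + 1 - K)) = 1}
         \<le> card {j\<in>{1..K}. a ^ (l + 1 - j) = 1 \<and> (\<exists>t\<in>{1..j}. a ^ t = 1)}"
    (is "card ?U \<le> card ?S")
proof (cases "?U = {}")
  case True then show ?thesis unfolding True by simp
next
  case False
  have roots: "a ^ j = 1" "a ^ (l + 1 - K) = 1" if "j \<in> ?U" for j
    using that power_dvd_eq_1[of a "gcd j (l + 1 - K)" j]
      power_dvd_eq_1[of a "gcd j (l + 1 - K)" "l + 1 - K"] by auto
  define j0 where "j0 = Min ?U"
  have j0U: "j0 \<in> ?U" using Min_in[OF _ False] by (simp add: j0_def)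
  have least: "j0 \<le> j" if "j \<in> ?U" for j using Min_le[OF _ that] by (simp add: j0_def)
  define f where "f j = K - j + j0" for j
  have "inj_on f ?U" unfolding inj_on_def f_def by auto
  moreover have "f ` ?U \<subseteq> ?S"
  proof
    fix x assume "x \<in> f ` ?U"
    then obtain j where jU: "j \<in> ?U" and x: "x = f j" by blast
    have "j0 \<le> j" using least[OF jU] .
    have "a ^ (j - j0) = 1"
      using power_diff_eq_1[of a j0 j] roots[OF jU] roots[OF j0U] \<open>j0 \<le> j\<close> by auto
    moreover have "l + 1 - x = (l + 1 - K) + (j - j0)"
      using jU \<open>j0 \<le> j\<close> assms by (auto simp: x f_def)
    ultimately have "a ^ (l + 1 - x) = 1" using roots[OF jU] by (simp add: power_add)
    moreover have "j0 \<in> {1..x}" "a ^ j0 = 1"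
      using jU j0U \<open>j0 \<le> j\<close> roots[OF j0U] by (auto simp: x f_def)
    moreover have "1 \<le> x" "x \<le> K" using jU j0U \<open>j0 \<le> j\<close> by (auto simp: x f_def)
    ultimately show "x \<in> ?S" by auto
  qed
  ultimately show ?thesis by (rule card_inj_on_le) simp
qed


section \<open>The generator\<close>

definition gcd_step :: "nat \<Rightarrow> nat \<Rightarrow> int poly" where
  "gcd_step l j = gcd (qbr (l + 1 - j)) (qfact j)"

definition gen :: "nat \<Rightarrow> nat \<Rightarrow> int poly" where
  "gen l k = (\<Prod>j\<in>{1..k}. gcd_step l j)"

lemma gcd_step_nonzero: "gcd_step l j \<noteq> 0"
  by (simp add: gcd_step_def qfact_nonzero)

lemma gen_0: "gen l 0 = 1"
  by (simp add: gen_def)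

lemma gen_Suc: "gen l (Suc k) = gen l k * gcd_step l (Suc k)"
  by (simp add: gen_def prod.cl_ivl_Suc)

lemma gen_nonzero: "gen l k \<noteq> 0"
  by (simp add: gen_def gcd_step_nonzero)

lemma lead_coeff_gen_unit: "is_unit (lead_coeff (gen l k))"
proof (rule lead_coeff_unit_if_dvd_monic)
  show "gen l k dvd (\<Prod>j\<in>{1..k}. qfact j)"
    unfolding gen_def gcd_step_def by (rule prod_dvd_prod) simp
  show "lead_coeff (\<Prod>j\<in>{1..k}. qfact j) = 1" by (simp add: lead_coeff_prod lead_coeff_qfact)
qed

lemma root_mult_gcd_step:
  assumes "1 \<le> j" "j \<le> l"
  shows "root_mult a (gcd_step l j) =
           (if a ^ (l + 1 - j) = 1 \<and> (\<exists>t\<in>{1..j}. a ^ t = 1) then 1 else 0)"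
proof -
  define n where "n = l + 1 - j"
  have "n > 0" using assms by (simp add: n_def)
  have le_qbr: "root_mult a (gcd_step l j) \<le> root_mult a (qbr n)"
    by (rule root_mult_dvd) (use \<open>n > 0\<close> in \<open>simp_all add: gcd_step_def n_def qbr_nonzero\<close>)
  have le_qfact: "root_mult a (gcd_step l j) \<le> root_mult a (qfact j)"
    by (rule root_mult_dvd) (simp_all add: gcd_step_def qfact_nonzero)
  show ?thesis
  proof (cases "a ^ n = 1 \<and> (\<exists>t\<in>{1..j}. a ^ t = 1)")
    case True
    then obtain t where t: "t \<in> {1..j}" "a ^ t = 1" by blast
    define e where "e = gcd n t"
    have "e > 0" using t by (simp add: e_def)
    have "qbr e dvd qbr n" by (rule qbr_dvd) (simp add: e_def)
    moreover have "qbr e dvd qfact j"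
      by (rule dvd_trans[OF qbr_dvd[of e t] qbr_dvd_qfact[of t j]]) (use t in \<open>auto simp: e_def\<close>)
    ultimately have "qbr e dvd gcd_step l j" by (simp add: gcd_step_def n_def)
    then have "root_mult a (qbr e) \<le> root_mult a (gcd_step l j)"
      by (rule root_mult_dvd[OF gcd_step_nonzero])
    moreover have "a ^ e = 1" using True t by (simp add: e_def power_gcd_eq_1)
    moreover have "root_mult a (qbr n) = 1" using True by (simp add: root_mult_qbr[OF \<open>n > 0\<close>])
    ultimately have "root_mult a (gcd_step l j) = 1"
      using le_qbr by (simp add: root_mult_qbr[OF \<open>e > 0\<close>])
    then show ?thesis using True by (simp add: n_def)
  next
    case False
    then have "root_mult a (qbr n) = 0 \<or> root_mult a (qfact j) = 0"
      by (auto simp: root_mult_qbr \<open>n > 0\<close> root_mult_qfact)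
    then show ?thesis using False le_qbr le_qfact by (auto simp: n_def)
  qed
qed

lemma root_mult_gen:
  assumes "k \<le> l"
  shows "root_mult a (gen l k) =
           card {j\<in>{1..k}. a ^ (l + 1 - j) = 1 \<and> (\<exists>t\<in>{1..j}. a ^ t = 1)}"
proof -
  have "root_mult a (gen l k) = (\<Sum>j\<in>{1..k}. root_mult a (gcd_step l j))"
    unfolding gen_def by (rule root_mult_prod) (auto simp: gcd_step_nonzero)
  also have "\<dots> = (\<Sum>j\<in>{1..k}. if a ^ (l + 1 - j) = 1 \<and> (\<exists>t\<in>{1..j}. a ^ t = 1) then 1 else 0)"
    by (rule sum.cong) (use assms in \<open>auto simp: root_mult_gcd_step\<close>)
  finally show ?thesis by (simp add: sum_indicator_card)
qed

lemma gen_dvd_qfact: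
  assumes "k \<le> l"
  shows "gen l k dvd qfact k"
proof (rule int_poly_dvd_by_root_mult[OF lead_coeff_gen_unit qfact_nonzero])
  fix a
  show "root_mult a (gen l k) \<le> root_mult a (qfact k)"
    unfolding root_mult_gen[OF assms] root_mult_qfact by (rule card_roots_shifted_le[OF assms])
qed

lemma prod_qbr_gcd_dvd_gen:
  assumes "k \<le> l"
  shows "(\<Prod>j\<in>{1..k}. qbr (gcd j (l + 1 - k))) dvd gen l k"
proof (rule int_poly_dvd_by_root_mult[OF _ gen_nonzero])
  show "is_unit (lead_coeff (\<Prod>j\<in>{1..k}. qbr (gcd j (l + 1 - k))))"
    by (simp add: lead_coeff_prod lead_coeff_qbr)
  fix a
  have "root_mult a (\<Prod>j\<in>{1..k}. qbr (gcd j (l + 1 - k)))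
        = (\<Sum>j\<in>{1..k}. if a ^ (gcd j (l + 1 - k)) = 1 then 1 else 0)"
    by (subst root_mult_prod) (auto simp: qbr_nonzero root_mult_qbr intro!: sum.cong)
  also have "\<dots> \<le> root_mult a (gen l k)"
    unfolding sum_indicator_card[OF finite_atLeastAtMost] root_mult_gen[OF assms]
    by (rule card_roots_gcd_le[OF assms])
  finally show "root_mult a (\<Prod>j\<in>{1..k}. qbr (gcd j (l + 1 - k))) \<le> root_mult a (gen l k)" .
qed

lemma comaximal_qbr_cofactor:
  assumes "j \<in> {1..k}" and p: "qbr n = gcd (qbr n) (qfact k) * p"
  shows "comaximal p (qbr j div qbr (gcd j n))"
proof -
  define g where "g = qbr (gcd j n)"
  have "g \<noteq> 0" using assms(1) by (simp add: g_def qbr_nonzero)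
  have "g dvd qfact k" unfolding g_def
    by (rule dvd_trans[OF qbr_dvd[of "gcd j n" j] qbr_dvd_qfact]) (use assms(1) in auto)
  moreover have "g dvd qbr n" unfolding g_def by (rule qbr_dvd) simp
  ultimately obtain y where y: "gcd (qbr n) (qfact k) = g * y" by (metis dvdE gcd_greatest)
  have j: "qbr j = g * (qbr j div g)" unfolding g_def by (simp add: qbr_dvd)
  obtain s t where "qbr (gcd n j) = s * qbr n + t * qbr j" using qbr_gcd_combination by blast
  then have "g = s * (g * (y * p)) + t * (g * (qbr j div g))"
    using p j y by (metis g_def gcd.commute mult.assoc)
  then have "comaximal (y * p) (qbr j div g)" by (rule comaximal_cofactors[OF \<open>g \<noteq> 0\<close>])
  then show ?thesis unfolding g_def by (rule comaximal_dvd_left) simp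
qed

text \<open>Hence the cofactors of gcd_step l k in {l+1-k}_q and of gen l k in {k}_q! are
  comaximal: the latter divides prod_j {j}_q / {gcd(j, l+1-k)}_q.\<close>

lemma comaximal_gen_cofactors:
  assumes "k \<le> l"
    and p: "qbr (l + 1 - k) = gcd_step l k * p" and q: "qfact k = gen l k * q"
  shows "comaximal p q"
proof -
  define n where "n = l + 1 - k"
  define B where "B = (\<Prod>j\<in>{1..k}. qbr (gcd j n))"
  define C where "C j = qbr j div qbr (gcd j n)" for j
  obtain X where X: "gen l k = B * X" using prod_qbr_gcd_dvd_gen[OF assms(1)] by (auto simp: B_def n_def)
  have "qfact k = B * (\<Prod>j\<in>{1..k}. C j)"
    unfolding qfact_prod B_def C_def prod.distrib[symmetric]
    by (rule prod.cong) (simp_all add: qbr_dvd)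
  then have "B * (\<Prod>j\<in>{1..k}. C j) = B * (X * q)" using q X by (metis mult.assoc)
  moreover have "B \<noteq> 0" by (simp add: B_def qbr_nonzero)
  ultimately have "(\<Prod>j\<in>{1..k}. C j) = q * X" by (simp add: mult.commute)
  then have "q dvd (\<Prod>j\<in>{1..k}. C j)" by simp
  moreover have "comaximal p (\<Prod>j\<in>{1..k}. C j)"
    using p by (intro comaximal_prod_right)
      (auto simp: C_def n_def gcd_step_def intro!: comaximal_qbr_cofactor)
  ultimately show ?thesis using comaximal_dvd_right by blast
qed


section \<open>The generator generates the ideal in Z[q]\<close>

lemma gen_dvd_h: "i \<le> k \<Longrightarrow> k \<le> l \<Longrightarrow> gen l k dvd h l k i"
proof (induction k arbitrary: i)
  case 0 then show ?case by (simp add: gen_0)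
next
  case (Suc k)
  show ?case
  proof (cases "i \<le> k")
    case True
    have "gcd_step l (Suc k) dvd qbr (l - k)" by (simp add: gcd_step_def)
    then have "gen l k * gcd_step l (Suc k) dvd h l k i * qbr (l - k)"
      using Suc True by (intro mult_dvd_mono) simp_all
    then show ?thesis using True Suc.prems by (simp add: gen_Suc h_Suc mult.commute)
  next
    case False
    then have "i = Suc k" using Suc.prems(1) by simp
    then show ?thesis using gen_dvd_qfact[OF Suc.prems(2)] by (simp add: h_diag)
  qed
qed

lemma gen_Suc_in_ideal:
  assumes "Suc k \<le> l"
  shows "\<exists>u v. gen l (Suc k) = u * (qbr (l - k) * gen l k) + v * qfact (Suc k)"
proof -
  have n: "l + 1 - Suc k = l - k" by simp
  obtain p where p: "qbr (l - k) = gcd_step l (Suc k) * p"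
    by (metis dvdE gcd_dvd1 gcd_step_def n)
  obtain q where q: "qfact (Suc k) = gen l (Suc k) * q" using gen_dvd_qfact[OF assms] by blast
  have "comaximal p q" using comaximal_gen_cofactors[OF assms] p q by (simp only: n)
  then obtain u v where "gen l k * gcd_step l (Suc k) =
      u * (gcd_step l (Suc k) * p * gen l k) + v * (gen l k * gcd_step l (Suc k) * q)"
    using comaximal_cofactors_generate by blast
  then show ?thesis using p q by (metis gen_Suc)
qed

lemma gen_combination_of_h: "k \<le> l \<Longrightarrow> \<exists>c. gen l k = (\<Sum>i\<le>k. c i * h l k i)"
proof (induction k)
  case 0 then show ?case by (intro exI[of _ "\<lambda>_. 1"]) (simp add: gen_0 h_diag qfact_0)
next
  case (Suc k)
  obtain c where c: "gen l k = (\<Sum>i\<le>k. c i * h l k i)" using Suc by auto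
  obtain u v where uv: "gen l (Suc k) = u * (qbr (l - k) * gen l k) + v * qfact (Suc k)"
    using gen_Suc_in_ideal[OF Suc.prems] by blast
  have "qbr (l - k) * gen l k = (\<Sum>i\<le>k. c i * h l (Suc k) i)"
    unfolding c sum_distrib_left by (rule sum.cong) (use Suc.prems in \<open>simp_all add: h_Suc\<close>)
  then have "gen l (Suc k) = (\<Sum>i\<le>Suc k. (if i \<le> k then u * c i else v) * h l (Suc k) i)"
    by (simp add: uv sum_distrib_left h_diag mult.assoc)
  then show ?case by (rule exI[of _ "\<lambda>i. if i \<le> k then u * c i else v"])
qed


theorem proposition4p3:
  fixes l k :: nat
  assumes "k \<le> l"
  shows "laurent_ideal (\<lambda>i. lp (h l k i)) k
         = laurent_ideal (\<lambda>_. lp (Gcd (h l k ` {0..k}))) 0"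
proof -
  obtain c where c: "gen l k = (\<Sum>i\<le>k. c i * h l k i)"
    using gen_combination_of_h[OF assms] by blast
  have "gen l k dvd Gcd (h l k ` {0..k})"
    using gen_dvd_h assms by (intro Gcd_greatest) auto
  then obtain w where w: "Gcd (h l k ` {0..k}) = gen l k * w" by blast
  have "Gcd (h l k ` {0..k}) = (\<Sum>i\<le>k. (w * c i) * h l k i)"
    unfolding w c sum_distrib_right by (rule sum.cong) (simp_all add: mult_ac)
  then show ?thesis
    by (rule laurent_ideal_eq_principal[rotated]) (auto intro: Gcd_dvd)
qed

end
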